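(* Let $p>5$ be a prime. Then $$\sum_{k=1}^{p-1}\frac{H_k^{(2)}}{(2k-1)16^k}\binom{2k}{k}^2\equiv4+p^2\left(4+8p-16p\,q_p(2)+\frac{2}{3}pB_{p-3}\right)\pmod{p^4}$$ and $$\sum_{k=1}^{\frac{p-1}{2}}\frac{H_k^{(2)}}{(2k-1)16^k}\binom{2k}{k}^2\equiv4-p\left(4+8p\,q_p(2)+\frac{7}{3}pB_{p-3}\right)\pmod{p^3}.$$
   Context: $H_n^{(2)}=\sum_{j=1}^n j^{-2}$. $q_p(2)=(2^{p-1}-1)/p$ is the Fermat quotient. Bernoulli numbers: $\sum_{n\ge0}B_nt^n/n!=t/(e^t-1)$. Congruences are between $p$-adic integers (rationals with denominator prime to $p$). *)

theory Defs
  imports "HOL-Computational_Algebra.Computational_Algebra"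
begin

definition bernoulli :: "nat \<Rightarrow> rat" where
  "bernoulli n = fact n * fps_nth (fps_X / (fps_exp 1 - 1)) n"

definition harm2 :: "nat \<Rightarrow> rat" where
  "harm2 n = (\<Sum>j=1..n. 1 / (of_nat j)^2)"

definition fermat_quot2 :: "nat \<Rightarrow> rat" where
  "fermat_quot2 p = (2^(p-1) - 1) / of_nat p"

text \<open>Congruence of rationals modulo an integer m: x - y = a/b with b coprime to m
  and m dividing a (p-adic integers congruence when m is a prime power).\<close>
definition qcong :: "rat \<Rightarrow> rat \<Rightarrow> int \<Rightarrow> bool" where
  "qcong x y m \<longleftrightarrow> (\<exists>a b. b \<noteq> 0 \<and> x - y = of_int a / of_int b \<and> coprime b m \<and> m dvd a)"

end

theory Submission
  imports Defs "HOL-Number_Theory.Residues"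
begin

text \<open>
  Both sums telescope: with \<open>w(N) = (2N+1) C(2N,N)^2 / 16^N\<close>, the partial sum up to \<open>N\<close>
  equals \<open>4 - (4 + H2(N)) w(N)\<close>, where \<open>H2\<close> is the second-order harmonic number. Here
  \<open>w((p-1)/2) = p C(p-1,(p-1)/2)^2 / (2^(p-1))^2\<close> and
  \<open>w(p-1) = p^2 (C(2p,p)/2)^2 / ((2p-1) (2^(p-1))^4)\<close>. Since \<open>2^(p-1) = 1 + p q\<close>,
  \<open>C(2p,p) \<equiv> 2\<close> and \<open>C(p-1,(p-1)/2)^2 \<equiv> 1 + 4pq\<close> modulo \<open>p^2\<close>, the two congruences reduce
  to \<open>H2(p-1) \<equiv> 2/3 p B(p-3)\<close> and \<open>H2((p-1)/2) \<equiv> 7/3 p B(p-3)\<close> modulo \<open>p^2\<close>.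

  Pairing \<open>j\<close> with \<open>p - j\<close>, and \<open>2j\<close> with \<open>p - 2j\<close>, in \<open>H2(p-1)\<close> yields two linear
  relations between these two harmonic sums and \<open>p T\<close>, where \<open>T = \<Sum>j\<le>(p-1)/2. 1/j^3\<close>.
  The same pairings applied to \<open>\<Sum>j<p. j^(p-3) \<equiv> p B(p-3) (mod p^2)\<close>, a consequence of
  Faulhaber's formula, show \<open>T \<equiv> -2 B(p-3) (mod p)\<close>. The argument only needs \<open>p > 3\<close>.
\<close>

section \<open>Rationals integral at \<open>p\<close> and congruences modulo powers of \<open>p\<close>\<close>

definition p_integral :: "nat \<Rightarrow> rat \<Rightarrow> bool" where
  "p_integral p x \<longleftrightarrow> (\<exists>a b::int. coprime b (int p) \<and> x = of_int a / of_int b)"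

definition p_unit :: "nat \<Rightarrow> rat \<Rightarrow> bool" where
  "p_unit p x \<longleftrightarrow> (\<exists>a b::int. coprime a (int p) \<and> coprime b (int p) \<and> x = of_int a / of_int b)"

definition pcong :: "nat \<Rightarrow> nat \<Rightarrow> rat \<Rightarrow> rat \<Rightarrow> bool" where
  "pcong p k x y \<longleftrightarrow> (\<exists>c. p_integral p c \<and> x = y + of_nat p ^ k * c)"

locale prime_modulus =
  fixes p :: nat
  assumes prime_p: "prime p"
begin

lemma coprime_imp_nonzero: "coprime (b::int) (int p) \<Longrightarrow> b \<noteq> 0"
  using prime_p by (auto simp: prime_nat_iff)

lemma p_integral_of_int [simp]: "p_integral p (of_int a)"
  unfolding p_integral_def by (rule exI[of _ a], rule exI[of _ 1]) simp

lemma p_integral_of_nat [simp]: "p_integral p (of_nat n)"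
  using p_integral_of_int[of "int n"] by simp

lemma p_integral_numeral [simp]: "p_integral p (numeral n)"
  using p_integral_of_int[of "numeral n"] by simp

lemma p_integral_0 [simp]: "p_integral p 0" and p_integral_1 [simp]: "p_integral p 1"
  using p_integral_of_int[of 0] p_integral_of_int[of 1] by simp_all

lemma p_integral_add [simp]:
  assumes "p_integral p x" "p_integral p y" shows "p_integral p (x + y)"
proof -
  obtain a b c d where x: "coprime b (int p)" "x = of_int a / of_int b"
    and y: "coprime d (int p)" "y = of_int c / of_int d"
    using assms unfolding p_integral_def by blast
  have "b \<noteq> 0" "d \<noteq> 0" using x y coprime_imp_nonzero by auto
  then have "x + y = of_int (a * d + c * b) / of_int (b * d)"
    using x y by (simp add: field_simps)
  moreover have "coprime (b * d) (int p)" using x y by simp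
  ultimately show ?thesis unfolding p_integral_def by blast
qed

lemma p_integral_mult [simp]:
  assumes "p_integral p x" "p_integral p y" shows "p_integral p (x * y)"
proof -
  obtain a b c d where x: "coprime b (int p)" "x = of_int a / of_int b"
    and y: "coprime d (int p)" "y = of_int c / of_int d"
    using assms unfolding p_integral_def by blast
  have "x * y = of_int (a * c) / of_int (b * d)" using x y by simp
  moreover have "coprime (b * d) (int p)" using x y by simp
  ultimately show ?thesis unfolding p_integral_def by blast
qed

lemma p_integral_uminus [simp]: "p_integral p x \<Longrightarrow> p_integral p (- x)"
  using p_integral_mult[OF p_integral_of_int[of "-1"]] by simp

lemma p_integral_diff [simp]: "p_integral p x \<Longrightarrow> p_integral p y \<Longrightarrow> p_integral p (x - y)"
  using p_integral_add[of x "- y"] by simp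

lemma p_integral_power [simp]: "p_integral p x \<Longrightarrow> p_integral p (x ^ n)"
  by (induction n) auto

lemma p_integral_sum [simp]: "(\<And>i. i \<in> A \<Longrightarrow> p_integral p (f i)) \<Longrightarrow> p_integral p (sum f A)"
  by (induction A rule: infinite_finite_induct) auto

lemma p_unit_imp_p_integral: "p_unit p x \<Longrightarrow> p_integral p x"
  unfolding p_unit_def p_integral_def by blast

lemma p_unit_inverse:
  assumes "p_unit p x" shows "p_unit p (inverse x)"
proof -
  obtain a b where "coprime a (int p)" "coprime b (int p)" "x = of_int a / of_int b"
    using assms unfolding p_unit_def by blast
  then show ?thesis unfolding p_unit_def by (intro exI[of _ b] exI[of _ a]) simp
qed

lemma p_integral_divide [simp]: "p_integral p x \<Longrightarrow> p_unit p y \<Longrightarrow> p_integral p (x / y)"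
  by (simp add: divide_inverse p_unit_inverse p_unit_imp_p_integral)

lemma p_unit_mult [simp]:
  assumes "p_unit p x" "p_unit p y" shows "p_unit p (x * y)"
proof -
  obtain a b c d where "coprime a (int p)" "coprime b (int p)" "x = of_int a / of_int b"
    and "coprime c (int p)" "coprime d (int p)" "y = of_int c / of_int d"
    using assms unfolding p_unit_def by blast
  then show ?thesis unfolding p_unit_def
    by (intro exI[of _ "a * c"] exI[of _ "b * d"]) simp
qed

lemma p_unit_1 [simp]: "p_unit p 1"
  unfolding p_unit_def by (intro exI[of _ 1]) simp

lemma p_unit_power [simp]: "p_unit p x \<Longrightarrow> p_unit p (x ^ n)"
  by (induction n) auto

lemma p_unit_nonzero: "p_unit p x \<Longrightarrow> x \<noteq> 0"
  unfolding p_unit_def using coprime_imp_nonzero by auto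

lemma p_unit_uminus [simp]: "p_unit p x \<Longrightarrow> p_unit p (- x)"
  using p_unit_mult[of "- 1" x] unfolding p_unit_def
  by (metis coprime_minus_left_iff minus_divide_left of_int_minus)

lemma p_unit_of_nat: "\<not> p dvd n \<Longrightarrow> p_unit p (of_nat n)"
  using prime_imp_coprime[OF prime_p] unfolding p_unit_def
  by (intro exI[of _ "int n"] exI[of _ 1]) (auto simp: coprime_commute)

lemma p_unit_of_nat_less: "0 < n \<Longrightarrow> n < p \<Longrightarrow> p_unit p (of_nat n)"
  by (rule p_unit_of_nat) (auto dest: dvd_imp_le)

lemma p_unit_add_multiple:
  assumes "p_unit p u" "p_integral p x" shows "p_unit p (u + of_nat p * x)"
proof -
  obtain a b c d where u: "coprime a (int p)" "coprime b (int p)" "u = of_int a / of_int b"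
    and x: "coprime d (int p)" "x = of_int c / of_int d"
    using assms unfolding p_unit_def p_integral_def by blast
  have "b \<noteq> 0" "d \<noteq> 0" using u x coprime_imp_nonzero by auto
  then have "u + of_nat p * x = of_int (a * d + int p * (c * b)) / of_int (b * d)"
    unfolding u x by (simp add: field_simps)
  moreover have "coprime (a * d + int p * (c * b)) (int p)"
  proof -
    have "gcd (int p) ((c * b) * int p + a * d) = gcd (int p) (a * d)" by (rule gcd_add_mult)
    moreover have "coprime (a * d) (int p)" using u x by simp
    ultimately show ?thesis by (simp add: coprime_iff_gcd_eq_1 gcd.commute ac_simps)
  qed
  moreover have "coprime (b * d) (int p)" using u x by simp
  ultimately show ?thesis unfolding p_unit_def by blast
qed

lemma pcongI: "p_integral p c \<Longrightarrow> x = y + of_nat p ^ k * c \<Longrightarrow> pcong p k x y"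
  unfolding pcong_def by blast

lemma pcongE:
  assumes "pcong p k x y"
  obtains c where "p_integral p c" "x = y + of_nat p ^ k * c"
  using assms unfolding pcong_def by blast

lemma pcong_refl [simp]: "pcong p k x x"
  by (rule pcongI[of 0]) simp_all

lemma pcong_sym: "pcong p k x y \<Longrightarrow> pcong p k y x"
  by (erule pcongE, rule pcongI[of "- c" for c]) auto

lemma pcong_trans [trans]: "pcong p k x y \<Longrightarrow> pcong p k y z \<Longrightarrow> pcong p k x z"
  by (elim pcongE, rule pcongI[of "c + d" for c d]) (auto simp: algebra_simps)

lemma pcong_eq_trans [trans]: "pcong p k x y \<Longrightarrow> y = z \<Longrightarrow> pcong p k x z"
  and eq_pcong_trans [trans]: "x = y \<Longrightarrow> pcong p k y z \<Longrightarrow> pcong p k x z"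
  by simp_all

lemma pcong_add: "pcong p k x y \<Longrightarrow> pcong p k u v \<Longrightarrow> pcong p k (x + u) (y + v)"
  by (elim pcongE, rule pcongI[of "c + d" for c d]) (auto simp: algebra_simps)

lemma pcong_uminus: "pcong p k x y \<Longrightarrow> pcong p k (- x) (- y)"
  by (erule pcongE, rule pcongI[of "- c" for c]) auto

lemma pcong_diff: "pcong p k x y \<Longrightarrow> pcong p k u v \<Longrightarrow> pcong p k (x - u) (y - v)"
  using pcong_add[of k x y "- u" "- v"] pcong_uminus by simp

lemma pcong_mult:
  assumes "pcong p k x y" "pcong p k u v" "p_integral p x" "p_integral p v"
  shows "pcong p k (x * u) (y * v)"
proof -
  obtain c d where c: "p_integral p c" "x - y = of_nat p ^ k * c"
    and d: "p_integral p d" "u - v = of_nat p ^ k * d"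
    using assms(1,2) by (elim pcongE) simp
  have "x * u - y * v = x * (u - v) + v * (x - y)" by (simp add: algebra_simps)
  also have "\<dots> = of_nat p ^ k * (x * d + v * c)" unfolding c d by (simp add: algebra_simps)
  finally have "x * u = y * v + of_nat p ^ k * (x * d + v * c)" by (simp add: algebra_simps)
  moreover have "p_integral p (x * d + v * c)" using assms(3,4) c(1) d(1) by simp
  ultimately show ?thesis by (intro pcongI)
qed

lemma pcong_divide: "pcong p k x y \<Longrightarrow> p_unit p u \<Longrightarrow> pcong p k (x / u) (y / u)"
  by (elim pcongE, rule pcongI[of "c / u" for c]) (auto simp: add_divide_distrib)

lemma pcong_divide_unit:
  assumes "pcong p k x (y * u)" "p_unit p u" shows "pcong p k (x / u) y"
  using pcong_divide[OF assms] p_unit_nonzero[OF assms(2)] by simp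

lemma pcong_sum:
  "(\<And>i. i \<in> A \<Longrightarrow> pcong p k (f i) (g i)) \<Longrightarrow> pcong p k (sum f A) (sum g A)"
  by (induction A rule: infinite_finite_induct) (auto intro: pcong_add)

lemma pcong_mult_prime_power:
  "pcong p k x y \<Longrightarrow> pcong p (j + k) (of_nat p ^ j * x) (of_nat p ^ j * y)"
  by (elim pcongE, rule pcongI) (auto simp: algebra_simps power_add)

lemma pcong_mono:
  assumes "pcong p k x y" "j \<le> k" shows "pcong p j x y"
proof -
  obtain c where "p_integral p c" "x = y + of_nat p ^ k * c" using assms(1) by (elim pcongE)
  moreover have "of_nat p ^ k = (of_nat p ^ j * of_nat p ^ (k - j) :: rat)"
    using assms(2) by (simp add: power_add[symmetric])
  ultimately show ?thesis by (intro pcongI[of "of_nat p ^ (k - j) * c"]) simp_all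
qed

lemma pcong_cancel_prime:
  assumes "pcong p (Suc k) (of_nat p * x) (of_nat p * y)" shows "pcong p k x y"
proof -
  obtain c where c: "p_integral p c" "of_nat p * x = of_nat p * y + of_nat p ^ Suc k * c"
    using assms by (elim pcongE)
  then have "of_nat p * x = of_nat p * (y + of_nat p ^ k * c)" by (simp add: algebra_simps)
  moreover have "(of_nat p :: rat) \<noteq> 0" using prime_p by (simp add: prime_gt_0_nat)
  ultimately show ?thesis using c(1) by (intro pcongI[of c]) simp_all
qed

lemma qcong_if_pcong:
  assumes "pcong p k x y" shows "qcong x y (int p ^ k)"
proof -
  obtain c where c: "p_integral p c" "x = y + of_nat p ^ k * c" using assms by (elim pcongE)
  then obtain a b where ab: "coprime b (int p)" "c = of_int a / of_int b"
    unfolding p_integral_def by blast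
  have "x - y = of_int (int p ^ k * a) / of_int b" using c ab by simp
  moreover have "b \<noteq> 0" using ab coprime_imp_nonzero by blast
  ultimately show ?thesis unfolding qcong_def using ab
    by (intro exI[of _ "int p ^ k * a"] exI[of _ b]) simp
qed

lemma pcong_mult_first_order:
  assumes "p_integral p a" "p_integral p b" "p_integral p c" "p_integral p d"
  shows "pcong p 2 ((a + of_nat p * b) * (c + of_nat p * d)) (a * c + of_nat p * (a * d + b * c))"
  using assms by (intro pcongI[of "b * d"]) (simp_all add: algebra_simps power2_eq_square)

lemma pcong_power_first_order:
  assumes "p_integral p x" "p_integral p y"
  shows "pcong p 2 ((x + of_nat p * y) ^ Suc n) (x ^ Suc n + of_nat p * (of_nat (Suc n) * y * x ^ n))"
proof (induction n)
  case 0
  show ?case by simp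
next
  case (Suc n)
  have "pcong p 2 ((x + of_nat p * y) * (x + of_nat p * y) ^ Suc n)
      ((x + of_nat p * y) * (x ^ Suc n + of_nat p * (of_nat (Suc n) * y * x ^ n)))"
    using Suc assms by (intro pcong_mult) simp_all
  also have "pcong p 2 \<dots> (x ^ Suc (Suc n) + of_nat p * (of_nat (Suc (Suc n)) * y * x ^ Suc n))"
    using pcong_mult_first_order[of x y "x ^ Suc n" "of_nat (Suc n) * y * x ^ n"] assms
    by (simp add: algebra_simps)
  finally show ?case by simp
qed

lemma pcong_prod_first_order:
  assumes "finite A" "\<And>j. j \<in> A \<Longrightarrow> p_integral p (x j)"
  shows "pcong p 2 (\<Prod>j\<in>A. 1 + of_nat p * x j) (1 + of_nat p * (\<Sum>j\<in>A. x j))"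
  using assms
proof (induction A rule: finite_induct)
  case empty
  show ?case by simp
next
  case (insert a A)
  then have "pcong p 2 ((1 + of_nat p * x a) * (\<Prod>j\<in>A. 1 + of_nat p * x j))
      ((1 + of_nat p * x a) * (1 + of_nat p * (\<Sum>j\<in>A. x j)))"
    by (intro pcong_mult) simp_all
  also have "pcong p 2 \<dots> (1 + of_nat p * (x a + (\<Sum>j\<in>A. x j)))"
    using pcong_mult_first_order[of 1 "x a" 1 "\<Sum>j\<in>A. x j"] insert by (simp add: add.commute)
  finally show ?case using insert by simp
qed

lemma pcong_of_int_cong: "[a = b] (mod int p ^ k) \<Longrightarrow> pcong p k (of_int a) (of_int b)"
  by (auto simp: cong_iff_dvd_diff dvd_def algebra_simps intro!: pcongI[of "of_int c" for c])

end

section \<open>Bernoulli numbers and sums of powers\<close>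

lemma bernoulli_egf_mult: "Abs_fps (\<lambda>n. bernoulli n / fact n) * (fps_exp 1 - 1) = fps_X"
proof -
  have "fps_exp (1::rat) - 1 \<noteq> 0"
  proof
    assume "fps_exp (1::rat) - 1 = 0"
    then have "(fps_exp (1::rat) - 1) $ 1 = 0" by simp
    then show False by simp
  qed
  moreover have "subdegree (fps_exp (1::rat) - 1) = 1"
    by (rule subdegreeI) auto
  ultimately have "fps_X / (fps_exp 1 - 1) * (fps_exp 1 - 1) = (fps_X :: rat fps)"
    by (intro fps_times_divide_eq) auto
  moreover have "Abs_fps (\<lambda>n. bernoulli n / fact n) = fps_X / (fps_exp 1 - 1)"
    by (simp add: bernoulli_def fps_eq_iff)
  ultimately show ?thesis by simp
qed

lemma sum_powers_bernoulli:
  "of_nat (Suc k) * (\<Sum>j<n. of_nat j ^ k)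
     = (\<Sum>i\<le>k. of_nat (Suc k choose i) * bernoulli i * of_nat n ^ (Suc k - i))"
proof -
  define G where "G = Abs_fps (\<lambda>n. bernoulli n / fact n)"
  have "(fps_exp 1 - 1) * (\<Sum>j<n. fps_exp (of_nat j)) = fps_exp (of_nat n) - (1::rat fps)"
    by (induction n) (simp_all add: algebra_simps fps_exp_add_mult[symmetric])
  then have "G * (fps_exp (of_nat n) - 1) = fps_X * (\<Sum>j<n. fps_exp (of_nat j))"
    using bernoulli_egf_mult unfolding G_def by (metis mult.assoc)
  then have "(G * (fps_exp (of_nat n) - 1)) $ Suc k = (\<Sum>j<n. of_nat j ^ k) / fact k"
    by (simp add: fps_sum_nth sum_divide_distrib)
  moreover have "(G * (fps_exp (of_nat n) - 1)) $ Suc k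
      = (\<Sum>i\<le>k. bernoulli i / fact i * (of_nat n ^ (Suc k - i) / fact (Suc k - i)))"
    unfolding fps_mult_nth atLeast0AtMost[symmetric] sum.atMost_Suc G_def by (simp add: mult.commute)
  ultimately have sum_eq: "(\<Sum>j<n. of_nat j ^ k) / fact k
      = (\<Sum>i\<le>k. bernoulli i / fact i * (of_nat n ^ (Suc k - i) / fact (Suc k - i)))"
    by simp
  have "of_nat (Suc k) * (\<Sum>j<n. of_nat j ^ k) = fact (Suc k) * ((\<Sum>j<n. of_nat j ^ k) / (fact k :: rat))"
    by (simp add: fact_Suc[of k])
  also have "\<dots> = (\<Sum>i\<le>k. fact (Suc k) * (bernoulli i / fact i * (of_nat n ^ (Suc k - i) / fact (Suc k - i))))"
    unfolding sum_eq sum_distrib_left ..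
  also have "\<dots> = (\<Sum>i\<le>k. of_nat (Suc k choose i) * bernoulli i * of_nat n ^ (Suc k - i))"
    by (intro sum.cong refl) (simp add: binomial_fact)
  finally show ?thesis .
qed

lemma bernoulli_0: "bernoulli 0 = 1"
  using sum_powers_bernoulli[of 0 1] by simp

lemma bernoulli_recurrence:
  "0 < k \<Longrightarrow> (\<Sum>i\<le>k. of_nat (Suc k choose i) * bernoulli i) = 0"
  using sum_powers_bernoulli[of k 1] by (simp add: zero_power)

context prime_modulus
begin

lemma p_integral_bernoulli: "Suc k < p \<Longrightarrow> p_integral p (bernoulli k)"
proof (induction k rule: less_induct)
  case (less k)
  show ?case
  proof (cases "k = 0")
    case True
    then show ?thesis by (simp add: bernoulli_0)
  next
    case False
    have "(\<Sum>i<k. of_nat (Suc k choose i) * bernoulli i) + of_nat (Suc k) * bernoulli k = 0"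
      using bernoulli_recurrence[of k] False by (simp add: lessThan_Suc_atMost[symmetric])
    then have "bernoulli k = - (\<Sum>i<k. of_nat (Suc k choose i) * bernoulli i) / of_nat (Suc k)"
      by (simp add: field_simps del: of_nat_Suc)
    moreover have "p_unit p (of_nat (Suc k))" using less.prems by (intro p_unit_of_nat_less) auto
    moreover have "p_integral p (\<Sum>i<k. of_nat (Suc k choose i) * bernoulli i)"
      using less by (intro p_integral_sum) simp
    ultimately show ?thesis by (simp del: of_nat_Suc)
  qed
qed

lemma sum_powers_cong_bernoulli:
  assumes "Suc k < p"
  shows "pcong p 2 (\<Sum>j<p. of_nat j ^ k) (of_nat p * bernoulli k)"
proof -
  define c where "c = (\<Sum>i<k. of_nat (Suc k choose i) * bernoulli i * of_nat p ^ (k - Suc i))"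
  have "of_nat (Suc k) * (\<Sum>j<p. of_nat j ^ k)
      = (\<Sum>i<k. of_nat (Suc k choose i) * bernoulli i * of_nat p ^ (Suc k - i))
        + of_nat (Suc k) * bernoulli k * of_nat p"
    using sum_powers_bernoulli[of k p] by (simp add: lessThan_Suc_atMost[symmetric])
  also have "(\<Sum>i<k. of_nat (Suc k choose i) * bernoulli i * of_nat p ^ (Suc k - i))
      = of_nat p ^ 2 * c"
    unfolding c_def sum_distrib_left
  proof (intro sum.cong refl)
    fix i assume "i \<in> {..<k}"
    then have "Suc k - i = 2 + (k - Suc i)" by auto
    then show "of_nat (Suc k choose i) * bernoulli i * of_nat p ^ (Suc k - i)
        = of_nat p ^ 2 * (of_nat (Suc k choose i) * bernoulli i * of_nat p ^ (k - Suc i))"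
      by (simp add: power_add power2_eq_square)
  qed
  finally have "(\<Sum>j<p. of_nat j ^ k) = of_nat p * bernoulli k + of_nat p ^ 2 * (c / of_nat (Suc k))"
    by (simp add: field_simps del: of_nat_Suc)
  moreover have "p_integral p c"
    unfolding c_def using assms by (auto intro!: p_integral_sum p_integral_mult p_integral_bernoulli)
  moreover have "p_unit p (of_nat (Suc k))" using assms by (intro p_unit_of_nat_less) auto
  ultimately show ?thesis by (intro pcongI[of "c / of_nat (Suc k)"]) simp_all
qed

end

section \<open>Harmonic sums modulo \<open>p\<^sup>2\<close>\<close>

lemma sum_split_reflect:
  fixes f :: "nat \<Rightarrow> 'a::comm_monoid_add"
  shows "(\<Sum>j=1..2*m. f j) = (\<Sum>i=1..m. f i + f (2*m+1-i))"
proof -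
  have "(\<Sum>j=1..m+m. f j) = (\<Sum>j=1..m. f j) + (\<Sum>j=Suc m..m+m. f j)"
    using sum.ub_add_nat[of 1 m f m] by simp
  also have "(\<Sum>j=Suc m..m+m. f j) = (\<Sum>i=1..m. f (2*m+1-i))"
    by (rule sum.reindex_bij_witness[of _ "\<lambda>j. 2*m+1-j" "\<lambda>i. 2*m+1-i"]) auto
  finally show ?thesis by (simp add: sum.distrib mult_2)
qed

lemma sum_split_parity:
  fixes f :: "nat \<Rightarrow> 'a::comm_monoid_add"
  shows "(\<Sum>j=1..2*m. f j) = (\<Sum>i=1..m. f (2*i) + f (2*m+1-2*i))"
proof -
  have "(\<Sum>j=1..2*m. f j) = (\<Sum>i=1..m. f (2*i)) + (\<Sum>i=1..m. f (2*i-1))"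
    by (induction m) (simp_all add: add_ac)
  also have "(\<Sum>i=1..m. f (2*i-1)) = (\<Sum>i=1..m. f (2*m+1-2*i))"
    by (rule sum.reindex_bij_witness[of _ "\<lambda>i. m+1-i" "\<lambda>i. m+1-i"])
       (auto intro: arg_cong[where f=f])
  finally show ?thesis by (simp add: sum.distrib)
qed

definition harm1 :: "nat \<Rightarrow> rat" where
  "harm1 n = (\<Sum>j=1..n. 1 / of_nat j)"

definition harm3 :: "nat \<Rightarrow> rat" where
  "harm3 n = (\<Sum>j=1..n. 1 / of_nat j ^ 3)"

definition power_sum :: "nat \<Rightarrow> nat \<Rightarrow> rat" where
  "power_sum k n = (\<Sum>j=1..n. of_nat j ^ k)"

context prime_modulus
begin

lemma p_integral_harm1: "n < p \<Longrightarrow> p_integral p (harm1 n)"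
  unfolding harm1_def by (intro p_integral_sum p_integral_divide p_unit_of_nat_less) auto

lemma fermat_pcong:
  assumes "0 < i" "i < p" shows "pcong p 1 (of_nat i ^ (p - 1)) 1"
proof -
  have "\<not> p dvd i" using assms by (auto dest: dvd_imp_le)
  then have "[int (i ^ (p - 1)) = int 1] (mod int p)"
    using fermat_theorem[OF prime_p] by (simp only: cong_int_iff)
  then show ?thesis using pcong_of_int_cong[of "int (i ^ (p - 1))" 1 1] by simp
qed

lemma two_power_pred_eq: "2 ^ (p - 1) = 1 + of_nat p * fermat_quot2 p"
  using prime_gt_0_nat[OF prime_p] by (simp add: fermat_quot2_def)

lemma pcong_inverse_square_reflect:
  assumes "p_unit p x"
  shows "pcong p 2 (1 / (of_nat p - x) ^ 2) (1 / x ^ 2 + 2 * of_nat p / x ^ 3)"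
proof (rule pcongI)
  have unit: "p_unit p (of_nat p - x)"
    using p_unit_add_multiple[of "- x" 1] assms by (simp add: algebra_simps)
  then have "x \<noteq> 0" "of_nat p - x \<noteq> 0" using assms p_unit_nonzero by blast+
  then show "1 / (of_nat p - x) ^ 2 = 1 / x ^ 2 + 2 * of_nat p / x ^ 3
      + of_nat p ^ 2 * ((3 * x - 2 * of_nat p) / (x ^ 3 * (of_nat p - x) ^ 2))"
    by (simp add: field_simps) (simp add: algebra_simps eval_nat_numeral)
  show "p_integral p ((3 * x - 2 * of_nat p) / (x ^ 3 * (of_nat p - x) ^ 2))"
    using assms unit by (simp add: p_unit_imp_p_integral)
qed

lemma pcong_power_reflect:
  assumes "even (Suc n)" "p_integral p x"
  shows "pcong p 2 ((of_nat p - x) ^ Suc n) (x ^ Suc n - of_nat p * (of_nat (Suc n) * x ^ n))"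
proof -
  have "of_nat p - x = - (x + of_nat p * (- 1))" by simp
  then have lhs: "(of_nat p - x) ^ Suc n = (x + of_nat p * (- 1)) ^ Suc n"
    using power_minus_even[OF assms(1)] by metis
  have rhs: "x ^ Suc n + of_nat p * (of_nat (Suc n) * (- 1) * x ^ n)
      = x ^ Suc n - of_nat p * (of_nat (Suc n) * x ^ n)"
    by (simp add: algebra_simps)
  have "pcong p 2 ((x + of_nat p * (- 1)) ^ Suc n)
      (x ^ Suc n + of_nat p * (of_nat (Suc n) * (- 1) * x ^ n))"
    using assms(2) by (intro pcong_power_first_order) simp_all
  then show ?thesis by (simp only: lhs rhs)
qed

end

locale prime_gt_3 = prime_modulus +
  assumes gt_3: "3 < p"
begin

lemma double_half: "2 * ((p - 1) div 2) = p - 1"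
proof -
  have "odd p" using prime_odd_nat[OF prime_p] gt_3 by simp
  then show ?thesis by presburger
qed

lemma double_half_less: "i \<le> (p - 1) div 2 \<Longrightarrow> 2 * i < p"
  using double_half gt_3 by linarith

lemma p_unit_2 [simp]: "p_unit p 2" and p_unit_3 [simp]: "p_unit p 3"
  using p_unit_of_nat_less[of 2] p_unit_of_nat_less[of 3] gt_3 by simp_all

lemma sum_split_reflect_prime:
  "(\<Sum>j=1..p-1. f j) = (\<Sum>i=1..(p-1) div 2. f i + f (p - i))"
  using sum_split_reflect[of f "(p - 1) div 2"] double_half gt_3 by simp

lemma sum_split_parity_prime:
  "(\<Sum>j=1..p-1. f j) = (\<Sum>i=1..(p-1) div 2. f (2*i) + f (p - 2*i))"
  using sum_split_parity[of f "(p - 1) div 2"] double_half gt_3 by simp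

lemma p_integral_fermat_quot2 [simp]: "p_integral p (fermat_quot2 p)"
proof -
  obtain c where "p_integral p c" "(of_nat 2) ^ (p - 1) = 1 + of_nat p * c"
    using fermat_pcong[of 2] gt_3 by (auto elim: pcongE)
  moreover have "(of_nat p :: rat) \<noteq> 0" using gt_3 by simp
  ultimately show ?thesis using two_power_pred_eq by simp
qed

lemma harm1_pred_cong: "pcong p 1 (harm1 (p - 1)) 0"
proof (rule pcongI)
  define c where "c = (\<Sum>i=1..(p-1) div 2. 1 / (of_nat i * of_nat (p - i) :: rat))"
  have "harm1 (p - 1) = of_nat p * c"
    unfolding harm1_def sum_split_reflect_prime c_def sum_distrib_left
    by (intro sum.cong refl) (auto simp: of_nat_diff field_simps)
  then show "harm1 (p - 1) = 0 + of_nat p ^ 1 * c" by simp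
  show "p_integral p c"
    unfolding c_def
    by (intro p_integral_sum p_integral_divide p_unit_mult p_unit_of_nat_less p_integral_1)
       (auto dest: double_half_less)
qed

lemma harm2_pred_cong_reflect:
  "pcong p 2 (harm2 (p - 1))
     (2 * harm2 ((p - 1) div 2) + 2 * of_nat p * harm3 ((p - 1) div 2))"
proof -
  have "harm2 (p - 1)
      = (\<Sum>i=1..(p-1) div 2. 1 / of_nat i ^ 2 + 1 / (of_nat p - of_nat i) ^ 2)"
    unfolding harm2_def sum_split_reflect_prime
    by (intro sum.cong refl) (auto simp: of_nat_diff dest: double_half_less)
  also have "pcong p 2 \<dots>
      (\<Sum>i=1..(p-1) div 2. 1 / of_nat i ^ 2 + (1 / of_nat i ^ 2 + 2 * of_nat p / of_nat i ^ 3))"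
    by (intro pcong_sum pcong_add pcong_refl pcong_inverse_square_reflect p_unit_of_nat_less)
       (auto dest: double_half_less)
  also have "\<dots> = 2 * harm2 ((p - 1) div 2) + 2 * of_nat p * harm3 ((p - 1) div 2)"
    unfolding harm2_def harm3_def sum_distrib_left sum.distrib[symmetric]
    by (intro sum.cong refl) simp
  finally show ?thesis .
qed

lemma harm2_pred_cong_parity:
  "pcong p 2 (harm2 (p - 1))
     (harm2 ((p - 1) div 2) / 2 + of_nat p * harm3 ((p - 1) div 2) / 4)"
proof -
  have "harm2 (p - 1)
      = (\<Sum>i=1..(p-1) div 2. 1 / of_nat (2 * i) ^ 2 + 1 / (of_nat p - of_nat (2 * i)) ^ 2)"
    unfolding harm2_def sum_split_parity_prime
    by (intro sum.cong refl) (auto simp: of_nat_diff dest: double_half_less)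
  also have "pcong p 2 \<dots> (\<Sum>i=1..(p-1) div 2. 1 / of_nat (2 * i) ^ 2
      + (1 / of_nat (2 * i) ^ 2 + 2 * of_nat p / of_nat (2 * i) ^ 3))"
    by (intro pcong_sum pcong_add pcong_refl pcong_inverse_square_reflect p_unit_of_nat_less)
       (auto dest: double_half_less)
  also have "\<dots> = harm2 ((p - 1) div 2) / 2 + of_nat p * harm3 ((p - 1) div 2) / 4"
    unfolding harm2_def harm3_def sum_distrib_left sum_divide_distrib sum.distrib[symmetric]
    by (intro sum.cong refl) (simp add: power_mult_distrib)
  finally show ?thesis .
qed

lemma even_p_minus_3: "even (p - 3)"
  using double_half gt_3 by presburger

lemma power_sum_pred_cong: "pcong p 2 (power_sum (p - 3) (p - 1)) (of_nat p * bernoulli (p - 3))"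
proof -
  have "(\<Sum>j<p. of_nat j ^ (p - 3)) = power_sum (p - 3) (p - 1)"
    unfolding power_sum_def using gt_3
    by (simp add: lessThan_atLeast0 atLeastLessThanSuc_atLeastAtMost[symmetric] sum.atLeast_Suc_lessThan)
  then show ?thesis using sum_powers_cong_bernoulli[of "p - 3"] gt_3 by simp
qed

lemma power_sum_pred_cong_reflect:
  "pcong p 2 (power_sum (p - 3) (p - 1))
     (2 * power_sum (p - 3) ((p - 1) div 2)
      - of_nat p * (of_nat (p - 3) * power_sum (p - 4) ((p - 1) div 2)))"
proof -
  have Suc: "Suc (p - 4) = p - 3" using gt_3 by simp
  have "power_sum (p - 3) (p - 1)
      = (\<Sum>i=1..(p-1) div 2. of_nat i ^ Suc (p - 4) + (of_nat p - of_nat i) ^ Suc (p - 4))"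
    unfolding power_sum_def sum_split_reflect_prime Suc
    by (intro sum.cong refl) (auto simp: of_nat_diff dest: double_half_less)
  also have "pcong p 2 \<dots> (\<Sum>i=1..(p-1) div 2. of_nat i ^ Suc (p - 4)
      + (of_nat i ^ Suc (p - 4) - of_nat p * (of_nat (Suc (p - 4)) * of_nat i ^ (p - 4))))"
    using even_p_minus_3 unfolding Suc[symmetric]
    by (intro pcong_sum pcong_add pcong_refl pcong_power_reflect) simp_all
  also have "\<dots> = 2 * power_sum (p - 3) ((p - 1) div 2)
      - of_nat p * (of_nat (p - 3) * power_sum (p - 4) ((p - 1) div 2))"
    unfolding Suc by (simp add: power_sum_def sum.distrib sum_subtractf sum_distrib_left)
  finally show ?thesis .
qed

lemma power_sum_pred_cong_parity:
  "pcong p 2 (power_sum (p - 3) (p - 1))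
     (2 ^ (p - 2) * power_sum (p - 3) ((p - 1) div 2)
      - of_nat p * (of_nat (p - 3) * 2 ^ (p - 4) * power_sum (p - 4) ((p - 1) div 2)))"
proof -
  have Suc: "Suc (p - 4) = p - 3" and Suc2: "Suc (Suc (p - 4)) = p - 2" using gt_3 by simp_all
  have "power_sum (p - 3) (p - 1) = (\<Sum>i=1..(p-1) div 2.
      of_nat (2 * i) ^ Suc (p - 4) + (of_nat p - of_nat (2 * i)) ^ Suc (p - 4))"
    unfolding power_sum_def sum_split_parity_prime Suc
    by (intro sum.cong refl) (auto simp: of_nat_diff dest: double_half_less)
  also have "pcong p 2 \<dots> (\<Sum>i=1..(p-1) div 2. of_nat (2 * i) ^ Suc (p - 4)
      + (of_nat (2 * i) ^ Suc (p - 4) - of_nat p * (of_nat (Suc (p - 4)) * of_nat (2 * i) ^ (p - 4))))"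
    using even_p_minus_3 unfolding Suc[symmetric]
    by (intro pcong_sum pcong_add pcong_refl pcong_power_reflect) simp_all
  also have "\<dots> = 2 ^ (p - 2) * power_sum (p - 3) ((p - 1) div 2)
      - of_nat p * (of_nat (p - 3) * 2 ^ (p - 4) * power_sum (p - 4) ((p - 1) div 2))"
    unfolding Suc[symmetric] Suc2[symmetric]
    by (simp add: power_sum_def sum.distrib sum_subtractf sum_distrib_left power_mult_distrib
        algebra_simps)
  finally show ?thesis .
qed

lemma power_sum_half_cong:
  "pcong p 1 (power_sum (p - 4) ((p - 1) div 2)) (- 2 * bernoulli (p - 3))"
proof -
  define S where "S = power_sum (p - 3) (p - 1)"
  define U where "U = power_sum (p - 3) ((p - 1) div 2)"
  define V where "V = power_sum (p - 4) ((p - 1) div 2)"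
  define B where "B = bernoulli (p - 3)"
  define P where "P = (of_nat p :: rat)"
  define q where "q = fermat_quot2 p"
  define s where "s = (2 :: rat) ^ (p - 4)"
  have "p - 2 = Suc (Suc (p - 4))" "p - 1 = Suc (Suc (Suc (p - 4)))" using gt_3 by simp_all
  then have two_powers: "(2 :: rat) ^ (p - 2) = 4 * s" "(2 :: rat) ^ (p - 1) = 8 * s"
    unfolding s_def by simp_all
  obtain c1 where c1: "p_integral p c1" "S = 2 * U - P * (P - 3) * V + P ^ 2 * c1"
    using power_sum_pred_cong_reflect gt_3
    by (elim pcongE) (simp add: S_def U_def V_def P_def of_nat_diff algebra_simps)
  obtain c2 where c2: "p_integral p c2" "S = 4 * s * U - P * (P - 3) * s * V + P ^ 2 * c2"
    using power_sum_pred_cong_parity gt_3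
    by (elim pcongE) (simp add: S_def U_def V_def P_def of_nat_diff algebra_simps two_powers s_def)
  obtain c3 where c3: "p_integral p c3" "S = P * B + P ^ 2 * c3"
    using power_sum_pred_cong by (elim pcongE) (simp add: S_def B_def P_def)
  have s: "s = (1 + P * q) / 8"
    using two_power_pred_eq two_powers(2) unfolding P_def q_def by simp
  \<comment> \<open>Combining the two expansions of \<open>S\<close> eliminates \<open>U\<close>.\<close>
  define W where "W = c2 - 2 * s * c1 - (1 - 2 * s) * c3"
  have "2 * s * S = 4 * s * U - 2 * s * P * (P - 3) * V + 2 * s * P ^ 2 * c1"
    unfolding c1(2) by (simp add: algebra_simps)
  moreover have "2 * s * S = 2 * s * P * B + 2 * s * P ^ 2 * c3"
    unfolding c3(2) by (simp add: algebra_simps)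
  ultimately have "P * ((1 - 2 * s) * B - (P - 3) * s * V) = P * (P * W)"
    using c2(2) c3(2) unfolding W_def by (simp only: algebra_simps power2_eq_square)
  then have W_eq: "(1 - 2 * s) * B - (P - 3) * s * V = P * W"
    unfolding P_def using gt_3 by simp
  define c where "c = (8 * W + 2 * q * B + V + P * q * V - 3 * q * V) / 3"
  have "p_integral p c"
    using c1(1) c2(1) c3(1) gt_3
    by (simp add: c_def W_def s_def q_def B_def V_def P_def power_sum_def p_integral_bernoulli)
  moreover from W_eq have "V = - 2 * B + P ^ 1 * c"
    unfolding s c_def by (simp add: field_simps)
  ultimately show ?thesis unfolding V_def B_def P_def by (rule pcongI)
qed

lemma harm3_half_cong_power_sum:
  "pcong p 1 (harm3 ((p - 1) div 2)) (power_sum (p - 4) ((p - 1) div 2))"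
  unfolding harm3_def power_sum_def
proof (intro pcong_sum)
  fix i assume "i \<in> {1..(p - 1) div 2}"
  then have i: "0 < i" "i < p" by (auto dest: double_half_less)
  obtain t where t: "p_integral p t" "of_nat i ^ (p - 1) = 1 + of_nat p * t"
    using fermat_pcong[OF i] by (elim pcongE) simp
  have "p - 1 = (p - 4) + 3" using gt_3 by simp
  then have "of_nat i ^ (p - 1) = of_nat i ^ (p - 4) * (of_nat i ^ 3 :: rat)"
    by (simp only: power_add)
  then have "1 / of_nat i ^ 3 = of_nat i ^ (p - 4) + of_nat p ^ 1 * (- t / of_nat i ^ 3)"
    using t(2) i by (simp add: field_simps)
  moreover have "p_integral p (- t / of_nat i ^ 3)"
    using t(1) i by (simp add: p_unit_of_nat_less)
  ultimately show "pcong p 1 (1 / of_nat i ^ 3) (of_nat i ^ (p - 4))"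
    by (rule pcongI[rotated])
qed

lemma harm3_half_cong: "pcong p 1 (harm3 ((p - 1) div 2)) (- 2 * bernoulli (p - 3))"
  using harm3_half_cong_power_sum power_sum_half_cong by (rule pcong_trans)

lemma harm2_cong_bernoulli:
  shows harm2_half_cong: "pcong p 2 (harm2 ((p - 1) div 2)) (7/3 * of_nat p * bernoulli (p - 3))"
    and harm2_pred_cong: "pcong p 2 (harm2 (p - 1)) (2/3 * of_nat p * bernoulli (p - 3))"
proof -
  define H where "H = harm2 ((p - 1) div 2)"
  define A where "A = harm2 (p - 1)"
  define T where "T = harm3 ((p - 1) div 2)"
  define B where "B = bernoulli (p - 3)"
  define P where "P = (of_nat p :: rat)"
  obtain c1 where c1: "p_integral p c1" "A = 2 * H + 2 * P * T + P ^ 2 * c1"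
    using harm2_pred_cong_reflect by (elim pcongE) (simp add: A_def H_def T_def P_def)
  obtain c2 where c2: "p_integral p c2" "A = H / 2 + P * T / 4 + P ^ 2 * c2"
    using harm2_pred_cong_parity by (elim pcongE) (simp add: A_def H_def T_def P_def)
  obtain t where t: "p_integral p t" "T = - 2 * B + P * t"
    using harm3_half_cong by (elim pcongE) (simp add: T_def B_def P_def)
  have H: "H = 7/3 * P * B + P ^ 2 * (2/3 * (c2 - c1) - 7/6 * t)"
    using c1(2) c2(2) unfolding t(2) by (simp add: field_simps power2_eq_square)
  have "A = 2/3 * P * B + P ^ 2 * (4/3 * c2 - 1/3 * c1 - 1/3 * t)"
    using c1(2) unfolding H t(2) by (simp add: field_simps power2_eq_square)
  moreover have "p_integral p (4/3 * c2 - 1/3 * c1 - 1/3 * t)" "p_integral p (2/3 * (c2 - c1) - 7/6 * t)"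
    using c1(1) c2(1) t(1) p_unit_mult[of 2 3] by simp_all
  ultimately show "pcong p 2 (harm2 ((p - 1) div 2)) (7/3 * of_nat p * bernoulli (p - 3))"
    and "pcong p 2 (harm2 (p - 1)) (2/3 * of_nat p * bernoulli (p - 3))"
    using H unfolding H_def A_def B_def P_def by (auto intro: pcongI)
qed

end

section \<open>Binomial coefficients modulo \<open>p\<^sup>2\<close>\<close>

lemma binomial_Suc_right_of_nat:
  "(of_nat (n choose Suc k) :: rat)
     = of_nat (n choose k) * (of_nat n - of_nat k) / of_nat (Suc k)"
proof (cases "k < n")
  case True
  have "Suc k * (n choose Suc k) = (n - k) * (n choose k)"
    using binomial_absorption[of k n] binomial_absorb_comp[of n k] by simp
  then have "of_nat (Suc k) * (of_nat (n choose Suc k) :: rat) = (of_nat n - of_nat k) * of_nat (n choose k)"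
    using True by (metis of_nat_diff of_nat_mult less_imp_le)
  then show ?thesis by (simp add: field_simps del: of_nat_Suc)
next
  case False
  then show ?thesis by (cases "k = n") (simp_all add: binomial_eq_0)
qed

lemma binomial_eq_prod:
  "(of_nat (n choose k) :: rat) = (- 1) ^ k * (\<Prod>j=1..k. 1 - of_nat (Suc n) / of_nat j)"
proof (induction k)
  case (Suc k)
  have "1 - of_nat (Suc n) / of_nat (Suc k) = - ((of_nat n - of_nat k) / (of_nat (Suc k) :: rat))"
    by (simp add: field_simps)
  then show ?case using Suc by (simp add: binomial_Suc_right_of_nat prod.cl_ivl_Suc del: of_nat_Suc)
qed simp

lemma sum_atMost_ends:
  fixes f :: "nat \<Rightarrow> 'a::comm_monoid_add"
  assumes "0 < n"
  shows "(\<Sum>k\<le>n. f k) = f 0 + (\<Sum>k=1..n-1. f k) + f n"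
proof -
  obtain m where n: "n = Suc m" using assms by (cases n) auto
  show ?thesis
    unfolding n sum.atMost_Suc atMost_atLeast0 by (simp add: sum.atLeast_Suc_atMost)
qed

lemma sum_binomial_inner:
  assumes "0 < n" shows "(\<Sum>k=1..n-1. of_nat (n choose k)) = (2 :: rat) ^ n - 2"
proof -
  have "(2 :: rat) ^ n = of_nat (\<Sum>k\<le>n. n choose k)" by (simp add: choose_row_sum)
  also have "\<dots> = 2 + (\<Sum>k=1..n-1. of_nat (n choose k))"
    using sum_atMost_ends[of n "\<lambda>k. n choose k"] assms by simp
  finally show ?thesis by simp
qed

lemma alternating_harm1:
  "(\<Sum>k=1..2*m. (- 1) ^ (k - 1) / of_nat k) = harm1 (2 * m) - harm1 m"
proof (induction m)
  case (Suc m)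
  have "1 / (of_nat m + 1 :: rat) = 2 / (2 * of_nat m + 2)" by (simp add: field_simps)
  then show ?case using Suc by (simp add: harm1_def algebra_simps)
qed (simp add: harm1_def)

context prime_modulus
begin

lemma binomial_pred_prime_cong:
  assumes "k < p"
  shows "pcong p 2 (of_nat ((p - 1) choose k)) ((- 1) ^ k * (1 - of_nat p * harm1 k))"
proof -
  have "of_nat ((p - 1) choose k) = (- 1) ^ k * (\<Prod>j=1..k. 1 + of_nat p * (- 1 / of_nat j :: rat))"
    using binomial_eq_prod[of "p - 1" k] prime_gt_0_nat[OF prime_p] by simp
  also have "pcong p 2 \<dots> ((- 1) ^ k * (1 + of_nat p * (\<Sum>j=1..k. - 1 / of_nat j)))"
  proof (intro pcong_mult pcong_refl pcong_prod_first_order)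
    show "p_integral p (1 + of_nat p * (\<Sum>j=1..k. - 1 / of_nat j))"
      using p_integral_harm1[OF assms] by (simp add: harm1_def sum_negf)
  qed (use assms in \<open>simp_all add: p_unit_of_nat_less\<close>)
  also have "\<dots> = (- 1) ^ k * (1 - of_nat p * harm1 k)"
    by (simp add: harm1_def sum_negf)
  finally show ?thesis .
qed

lemma binomial_prime_cong:
  assumes "0 < k" "k < p"
  shows "pcong p 2 (of_nat (p choose k)) (of_nat p * (- 1) ^ (k - 1) / of_nat k)"
proof -
  have "pcong p 2 (of_nat ((p - 1) choose (k - 1))) ((- 1) ^ (k - 1) * (1 - of_nat p * harm1 (k - 1)))"
    using assms by (intro binomial_pred_prime_cong) simp
  then have "pcong p 1 (of_nat ((p - 1) choose (k - 1))) ((- 1) ^ (k - 1) * (1 - of_nat p * harm1 (k - 1)))"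
    by (rule pcong_mono) simp
  also have "pcong p 1 \<dots> ((- 1) ^ (k - 1))"
    using p_integral_harm1[of "k - 1"] assms
    by (intro pcongI[of "- ((- 1) ^ (k - 1) * harm1 (k - 1))"]) (simp_all add: right_diff_distrib)
  finally have "pcong p (1 + 1) (of_nat p ^ 1 * of_nat ((p - 1) choose (k - 1)) / of_nat k)
      (of_nat p ^ 1 * (- 1) ^ (k - 1) / of_nat k)"
    using assms by (intro pcong_divide pcong_mult_prime_power p_unit_of_nat_less)
  moreover have "(of_nat (p choose k) :: rat) = of_nat (k * (p choose k)) / of_nat k"
    using assms(1) by simp
  ultimately show ?thesis
    by (simp only: times_binomial_minus1_eq[OF assms(1)] of_nat_mult one_add_one power_one_right)
qed

lemma central_binomial_prime_cong: "pcong p 2 (of_nat ((2 * p) choose p)) 2"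
proof -
  have "p ^ 2 dvd (\<Sum>k=1..p-1. (p choose k) ^ 2)"
    using prime_p by (intro dvd_sum dvd_power_same dvd_choose_prime) auto
  then obtain N where N: "(\<Sum>k=1..p-1. (p choose k) ^ 2) = p ^ 2 * N" by (elim dvdE)
  have "(2 * p) choose p = (\<Sum>k\<le>p. (p choose k) ^ 2)" by (rule choose_square_sum[symmetric])
  also have "\<dots> = 2 + (\<Sum>k=1..p-1. (p choose k) ^ 2)"
    using sum_atMost_ends[of p "\<lambda>k. (p choose k) ^ 2"] prime_gt_0_nat[OF prime_p] by simp
  finally have "(of_nat ((2 * p) choose p) :: rat) = 2 + of_nat p ^ 2 * of_nat N"
    unfolding N by simp
  then show ?thesis by (intro pcongI[of "of_nat N"]) simp_all
qed

end

context prime_gt_3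
begin

lemma harm1_half_cong: "pcong p 1 (harm1 ((p - 1) div 2)) (- 2 * fermat_quot2 p)"
proof -
  have "(2 :: rat) ^ p - 2 = 2 * (2 ^ (p - 1) - 1)" using gt_3 by (cases p) simp_all
  then have "of_nat p * (2 * fermat_quot2 p) = (\<Sum>k=1..p-1. of_nat (p choose k))"
    unfolding sum_binomial_inner[OF prime_gt_0_nat[OF prime_p]] two_power_pred_eq by simp
  also have "pcong p 2 \<dots> (\<Sum>k=1..p-1. of_nat p * (- 1) ^ (k - 1) / of_nat k)"
    by (intro pcong_sum binomial_prime_cong) auto
  also have "\<dots> = of_nat p * (harm1 (p - 1) - harm1 ((p - 1) div 2))"
    unfolding times_divide_eq_right[symmetric] sum_distrib_left[symmetric]
      alternating_harm1[of "(p - 1) div 2", unfolded double_half] ..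
  finally have "pcong p 1 (2 * fermat_quot2 p) (harm1 (p - 1) - harm1 ((p - 1) div 2))"
    using pcong_cancel_prime[of 1] by (simp add: numeral_2_eq_2)
  from harm1_pred_cong pcong_sym[OF this]
  have "pcong p 1 (harm1 (p - 1) - (harm1 (p - 1) - harm1 ((p - 1) div 2)))
      (0 - 2 * fermat_quot2 p)"
    by (rule pcong_diff)
  then show ?thesis by simp
qed

lemma central_binomial_half_cong:
  "pcong p 2 (of_nat ((p - 1) choose ((p - 1) div 2)) ^ 2) (1 + 4 * of_nat p * fermat_quot2 p)"
proof -
  define m where "m = (p - 1) div 2"
  have m: "m < p" using double_half_less[of m] unfolding m_def by simp
  have "pcong p 2 (of_nat ((p - 1) choose m) * of_nat ((p - 1) choose m))
      (((- 1) ^ m * (1 - of_nat p * harm1 m)) * ((- 1) ^ m * (1 - of_nat p * harm1 m)))"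
    using binomial_pred_prime_cong[OF m] p_integral_harm1[OF m] by (intro pcong_mult) simp_all
  also have "\<dots> = (1 + of_nat p * (- harm1 m)) ^ Suc 1"
    by (simp add: power2_eq_square flip: power_mult_distrib)
  also have "pcong p 2 \<dots> (1 - 2 * (of_nat p ^ 1 * harm1 m))"
    using pcong_power_first_order[of 1 "- harm1 m" 1] p_integral_harm1[OF m]
    by (simp add: mult.left_commute)
  also have "pcong p 2 \<dots> (1 - 2 * (of_nat p ^ 1 * (- 2 * fermat_quot2 p)))"
  proof (rule pcong_diff[OF pcong_refl], rule pcong_mult[OF pcong_refl])
    show "pcong p 2 (of_nat p ^ 1 * harm1 m) (of_nat p ^ 1 * (- 2 * fermat_quot2 p))"
      using pcong_mult_prime_power[OF harm1_half_cong, of 1] unfolding m_def one_add_one .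
  qed simp_all
  finally show ?thesis unfolding m_def by (simp add: power2_eq_square mult.assoc)
qed

end

section \<open>The telescoping sum\<close>

lemma central_binomial_Suc:
  "(of_nat (2 * Suc n choose Suc n) :: rat)
     = 2 * (2 * of_nat n + 1) / (of_nat n + 1) * of_nat (2 * n choose n)"
proof -
  have "Suc n * (Suc (2 * n + 1) choose Suc n) = Suc (2 * n + 1) * (2 * n + 1 choose n)"
    by (rule Suc_times_binomial)
  moreover have "Suc n * (2 * n + 1 choose n) = (2 * n + 1) * (2 * n choose n)"
    using binomial_absorb_comp[of "2 * n + 1" n] by (simp add: Suc_diff_le)
  ultimately have "Suc n * (Suc n * (2 * Suc n choose Suc n)) = Suc n * (2 * (2 * n + 1) * (2 * n choose n))"
    by (simp add: algebra_simps)
  then have "of_nat (Suc n) * (of_nat (2 * Suc n choose Suc n) :: rat) = 2 * (2 * of_nat n + 1) * of_nat (2 * n choose n)"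
    by (metis (mono_tags) mult_left_cancel nat.distinct(1) of_nat_1 of_nat_add of_nat_mult of_nat_numeral)
  then show ?thesis by (simp add: field_simps del: binomial_Suc_Suc)
qed

lemma harm2_Suc: "harm2 (Suc n) = harm2 n + 1 / (of_nat n + 1) ^ 2"
  unfolding harm2_def by (simp add: add.commute)

definition harm2_binomial_sum :: "nat \<Rightarrow> rat" where
  "harm2_binomial_sum N = (\<Sum>k=1..N. harm2 k / ((2 * of_nat k - 1) * 16 ^ k) * of_nat ((2 * k) choose k) ^ 2)"

definition central_weight :: "nat \<Rightarrow> rat" where
  "central_weight k = (2 * of_nat k + 1) * of_nat ((2 * k) choose k) ^ 2 / 16 ^ k"

lemma central_weight_Suc:
  "central_weight (Suc n) = (4 * (of_nat n + 1) ^ 2 - 1) * central_weight n / (4 * (of_nat n + 1) ^ 2)"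
proof -
  define z where "z = 2 * of_nat n + (1 :: rat)"
  define d where "d = of_nat n + (1 :: rat)"
  define c where "c = (of_nat ((2 * n) choose n) :: rat)"
  have nz: "z \<noteq> 0" "d \<noteq> 0" unfolding z_def d_def by linarith+
  have "central_weight (Suc n) = (2 * d + 1) * (2 * z / d * c) ^ 2 / (16 * 16 ^ n)"
    unfolding central_weight_def central_binomial_Suc z_def d_def c_def by simp
  also have "\<dots> = ((2 * d + 1) * z) * central_weight n / (4 * d ^ 2)"
    unfolding central_weight_def z_def[symmetric] c_def[symmetric] using nz
    by (simp add: field_simps power2_eq_square)
  also have "(2 * d + 1) * z = 4 * d ^ 2 - 1"
    unfolding z_def d_def by (simp add: algebra_simps power2_eq_square)
  finally show ?thesis unfolding d_def .
qed

lemma harm2_binomial_summand_Suc: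
  "harm2 (Suc n) / ((2 * of_nat (Suc n) - 1) * 16 ^ Suc n) * of_nat ((2 * Suc n) choose Suc n) ^ 2
     = harm2 (Suc n) * central_weight n / (4 * (of_nat n + 1) ^ 2)"
proof -
  define z where "z = 2 * of_nat n + (1 :: rat)"
  define d where "d = of_nat n + (1 :: rat)"
  define c where "c = (of_nat ((2 * n) choose n) :: rat)"
  have nz: "z \<noteq> 0" "d \<noteq> 0" unfolding z_def d_def by linarith+
  have "harm2 (Suc n) / ((2 * of_nat (Suc n) - 1) * 16 ^ Suc n) * of_nat ((2 * Suc n) choose Suc n) ^ 2
      = harm2 (Suc n) / (z * (16 * 16 ^ n)) * (2 * z / d * c) ^ 2"
    unfolding central_binomial_Suc z_def d_def c_def by simp
  also have "\<dots> = harm2 (Suc n) * central_weight n / (4 * d ^ 2)"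
    unfolding central_weight_def z_def[symmetric] c_def[symmetric] using nz
    by (simp add: field_simps power2_eq_square)
  finally show ?thesis unfolding d_def .
qed

lemma harm2_binomial_sum_eq: "harm2_binomial_sum N = 4 - (4 + harm2 N) * central_weight N"
proof (induction N)
  case 0
  show ?case by (simp add: harm2_binomial_sum_def harm2_def central_weight_def)
next
  case (Suc N)
  have "harm2_binomial_sum (Suc N)
      = harm2_binomial_sum N + harm2 (Suc N) * central_weight N / (4 * (of_nat N + 1) ^ 2)"
    unfolding harm2_binomial_sum_def sum.cl_ivl_Suc harm2_binomial_summand_Suc by simp
  moreover have "of_nat N + 1 \<noteq> (0 :: rat)" by linarith
  ultimately show ?case
    unfolding Suc.IH harm2_Suc central_weight_Suc by (simp add: field_simps)
qed
context prime_gt_3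
begin

lemma harm2_binomial_sum_half_eq:
  "harm2_binomial_sum ((p - 1) div 2) = 4 - of_nat p * ((4 + harm2 ((p - 1) div 2))
     * of_nat ((p - 1) choose ((p - 1) div 2)) ^ 2 / (2 ^ (p - 1)) ^ 2)"
proof -
  define m where "m = (p - 1) div 2"
  have "(16 :: rat) ^ m = (2 ^ 4) ^ m" by simp
  also have "\<dots> = (2 ^ (2 * m)) ^ 2" by (simp only: power_mult[symmetric] ac_simps) simp
  moreover have "2 * m = p - 1" "2 * of_nat m + 1 = (of_nat p :: rat)"
    unfolding m_def using double_half gt_3 by (simp_all flip: of_nat_mult)
  ultimately show ?thesis unfolding harm2_binomial_sum_eq central_weight_def m_def[symmetric] by simp
qed

lemma harm2_binomial_sum_half_core_cong:
  "pcong p 2 ((4 + harm2 ((p - 1) div 2)) * of_nat ((p - 1) choose ((p - 1) div 2)) ^ 2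
       / (2 ^ (p - 1)) ^ 2)
     (4 + of_nat p * (8 * fermat_quot2 p + 7/3 * bernoulli (p - 3)))"
proof -
  define P where "P = (of_nat p :: rat)"
  define q where "q = fermat_quot2 p"
  define B where "B = bernoulli (p - 3)"
  define H where "H = harm2 ((p - 1) div 2)"
  define C where "C = (of_nat ((p - 1) choose ((p - 1) div 2)) :: rat)"
  have [simp]: "p_integral p q" "p_integral p B" "p_integral p C"
    unfolding q_def B_def C_def using gt_3 by (simp_all add: p_integral_bernoulli)
  have "pcong p 2 (C ^ 2) (1 + P * (4 * q))"
    using central_binomial_half_cong unfolding C_def P_def q_def by (simp add: ac_simps)
  moreover have "pcong p 2 (4 + H) (4 + P * (7/3 * B))"
    using harm2_half_cong unfolding H_def P_def B_def by (intro pcong_add pcong_refl) (simp add: ac_simps)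
  ultimately have "pcong p 2 (C ^ 2 * (4 + H)) ((1 + P * (4 * q)) * (4 + P * (7/3 * B)))"
    by (intro pcong_mult) (simp_all add: P_def)
  also have "pcong p 2 \<dots> (4 + P * (16 * q + 7/3 * B))"
    using pcong_mult_first_order[of 1 "4 * q" 4 "7/3 * B"] unfolding P_def by (simp add: algebra_simps)
  also have "pcong p 2 \<dots> ((4 + P * (8 * q + 7/3 * B)) * (1 + P * (2 * q)))"
    using pcong_sym[OF pcong_mult_first_order[of 4 "8 * q + 7/3 * B" 1 "2 * q"]] unfolding P_def
    by (simp add: algebra_simps)
  also have "pcong p 2 \<dots> ((4 + P * (8 * q + 7/3 * B)) * (2 ^ (p - 1)) ^ 2)"
    using pcong_sym[OF pcong_power_first_order[of 1 q 1]] unfolding two_power_pred_eq P_def q_def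
    by (intro pcong_mult pcong_refl) (simp_all add: algebra_simps power2_eq_square)
  finally show ?thesis
    unfolding H_def[symmetric] C_def[symmetric] P_def[symmetric] q_def[symmetric] B_def[symmetric]
    by (intro pcong_divide_unit) (simp_all add: mult.commute)
qed

lemma harm2_binomial_sum_half_cong:
  "pcong p 3 (harm2_binomial_sum ((p - 1) div 2))
     (4 - of_nat p * (4 + 8 * of_nat p * fermat_quot2 p + 7/3 * of_nat p * bernoulli (p - 3)))"
proof -
  have "pcong p (1 + 2) (of_nat p ^ 1 * ((4 + harm2 ((p - 1) div 2))
        * of_nat ((p - 1) choose ((p - 1) div 2)) ^ 2 / (2 ^ (p - 1)) ^ 2))
      (of_nat p ^ 1 * (4 + of_nat p * (8 * fermat_quot2 p + 7/3 * bernoulli (p - 3))))"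
    using harm2_binomial_sum_half_core_cong by (rule pcong_mult_prime_power)
  then show ?thesis
    unfolding harm2_binomial_sum_half_eq
    by (intro pcong_diff[OF pcong_refl]) (simp add: numeral_3_eq_3 algebra_simps)
qed

lemma harm2_binomial_sum_pred_eq:
  "harm2_binomial_sum (p - 1) = 4 + of_nat p ^ 2 * ((4 + harm2 (p - 1))
     * (of_nat ((2 * p) choose p) / 2) ^ 2 / ((1 - 2 * of_nat p) * (2 ^ (p - 1)) ^ 4))"
proof -
  define P where "P = (of_nat p :: rat)"
  define u where "u = 1 - 2 * P"
  have nz: "u \<noteq> 0" unfolding u_def P_def using gt_3 by linarith
  have "(16 :: rat) ^ (p - 1) = (2 ^ 4) ^ (p - 1)" by simp
  also have "\<dots> = (2 ^ (p - 1)) ^ 4" by (simp only: power_mult[symmetric] mult.commute)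
  finally have sixteen: "(16 :: rat) ^ (p - 1) = (2 ^ (p - 1)) ^ 4" .
  have "- u * of_nat ((2 * (p - 1)) choose (p - 1)) = P * (of_nat ((2 * p) choose p) / 2)"
    using central_binomial_Suc[of "p - 1"] gt_3 unfolding u_def P_def
    by (simp add: field_simps of_nat_diff)
  then have binom: "of_nat ((2 * (p - 1)) choose (p - 1)) = - (P * (of_nat ((2 * p) choose p) / 2) / u)"
    using nz by (simp add: field_simps)
  have odd: "2 * of_nat (p - 1) + 1 = - u" unfolding u_def P_def using gt_3 by (simp add: of_nat_diff)
  show ?thesis
    unfolding harm2_binomial_sum_eq central_weight_def binom odd sixteen P_def[symmetric] u_def[symmetric]
    using nz
    by (simp add: field_simps power2_eq_square)
qed

lemma harm2_binomial_sum_pred_core_cong: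
  "pcong p 2 ((4 + harm2 (p - 1)) * (of_nat ((2 * p) choose p) / 2) ^ 2
       / ((1 - 2 * of_nat p) * (2 ^ (p - 1)) ^ 4))
     (4 + 8 * of_nat p - 16 * of_nat p * fermat_quot2 p + 2/3 * of_nat p * bernoulli (p - 3))"
proof -
  define P where "P = (of_nat p :: rat)"
  define q where "q = fermat_quot2 p"
  define B where "B = bernoulli (p - 3)"
  define A where "A = harm2 (p - 1)"
  define D where "D = (of_nat ((2 * p) choose p) :: rat) / 2"
  define X where "X = 4 + P * (8 - 16 * q + 2/3 * B)"
  have [simp]: "p_integral p q" "p_integral p B" "p_integral p D"
    unfolding q_def B_def D_def using gt_3 by (simp_all add: p_integral_bernoulli)
  have "p_unit p (1 - 2 * P)"
    using p_unit_add_multiple[of 1 "- 2"] unfolding P_def by (simp add: algebra_simps)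
  then have unit: "p_unit p ((1 - 2 * P) * (2 ^ (p - 1)) ^ 4)" by simp
  have "pcong p 2 (D * 2) (1 * 2)"
    using central_binomial_prime_cong unfolding D_def by simp
  then have "pcong p 2 D 1"
    using pcong_divide_unit[of 2 "D * 2" 1 2] by simp
  moreover have "pcong p 2 A (P * (2/3 * B))"
    using harm2_pred_cong unfolding A_def P_def B_def by (simp add: ac_simps)
  ultimately have "pcong p 2 (D * D * (4 + A)) (1 * 1 * (4 + P * (2/3 * B)))"
    by (intro pcong_mult pcong_add pcong_refl) (simp_all add: P_def)
  also have "pcong p 2 \<dots> ((4 + P * (- 16 * q + 2/3 * B)) * (1 + P * (4 * q)))"
    using pcong_sym[OF pcong_mult_first_order[of 4 "- 16 * q + 2/3 * B" 1 "4 * q"]]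
    unfolding P_def by (simp add: algebra_simps)
  also have "pcong p 2 \<dots> ((X * (1 - 2 * P)) * (2 ^ (p - 1)) ^ 4)"
  proof (rule pcong_mult)
    show "pcong p 2 (4 + P * (- 16 * q + 2/3 * B)) (X * (1 - 2 * P))"
      using pcong_sym[OF pcong_mult_first_order[of 4 "8 - 16 * q + 2/3 * B" 1 "- 2"]]
      unfolding X_def P_def by (simp add: algebra_simps)
    show "pcong p 2 (1 + P * (4 * q)) ((2 ^ (p - 1)) ^ 4)"
      using pcong_sym[OF pcong_power_first_order[of 1 q 3]] unfolding two_power_pred_eq P_def q_def
      by simp
  qed (simp_all add: P_def)
  finally have "pcong p 2 ((4 + A) * D ^ 2) (X * ((1 - 2 * P) * (2 ^ (p - 1)) ^ 4))"
    by (simp add: mult.assoc mult.commute power2_eq_square)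
  then have "pcong p 2 ((4 + A) * D ^ 2 / ((1 - 2 * P) * (2 ^ (p - 1)) ^ 4)) X"
    using unit by (rule pcong_divide_unit)
  then show ?thesis
    unfolding A_def[symmetric] D_def[symmetric] P_def[symmetric] q_def[symmetric] B_def[symmetric]
    by (simp add: X_def algebra_simps)
qed

lemma harm2_binomial_sum_pred_cong:
  "pcong p 4 (harm2_binomial_sum (p - 1))
     (4 + of_nat p ^ 2 * (4 + 8 * of_nat p - 16 * of_nat p * fermat_quot2 p
        + 2/3 * of_nat p * bernoulli (p - 3)))"
  unfolding harm2_binomial_sum_pred_eq
  using pcong_mult_prime_power[OF harm2_binomial_sum_pred_core_cong, of 2]
  by (intro pcong_add[OF pcong_refl]) simp

end

theorem corollary1p4:
  fixes p :: nat
  assumes "prime p" and "p > 5"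
  shows "qcong (\<Sum>k=1..p-1. harm2 k / ((2 * of_nat k - 1) * 16^k) * (of_nat ((2*k) choose k))^2)
            (4 + (of_nat p)^2 * (4 + 8 * of_nat p - 16 * of_nat p * fermat_quot2 p
                 + 2/3 * of_nat p * bernoulli (p-3)))
            (int p ^ 4)
       \<and> qcong (\<Sum>k=1..(p-1) div 2. harm2 k / ((2 * of_nat k - 1) * 16^k) * (of_nat ((2*k) choose k))^2)
            (4 - of_nat p * (4 + 8 * of_nat p * fermat_quot2 p + 7/3 * of_nat p * bernoulli (p-3)))
            (int p ^ 3)"
proof -
  interpret prime_gt_3 p
    using assms by unfold_locales simp_all
  show ?thesis
    using harm2_binomial_sum_pred_cong harm2_binomial_sum_half_cong
    unfolding harm2_binomial_sum_def by (blast intro: qcong_if_pcong)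
qed

end
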